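(* For every graph $G$ with $\mu$ maximal cliques, $b_H(G)\le \mu-1$.
   Context: A grid is the set of integer points of the plane; a grid edge joins two grid points at distance $1$. A path in the grid is a sequence of distinct grid edges in which consecutive edges share exactly one grid point and non-consecutive edges share none; a bend is a pair of consecutive edges with different directions (horizontal/vertical). An EPG representation of a graph $G$ is a family $(P_v)_{v\in V(G)}$ of grid paths such that distinct $u,v$ are adjacent iff $P_u,P_v$ share a grid edge; it is $B_k$-EPG if every path has at most $k$ bends, and Helly if every subfamily of pairwise edge-intersecting paths has a grid edge common to all its members. The Helly-bend number $b_H(G)$ is the smallest $k$ such that $G$ admits a Helly $B_k$-EPG representation. *)

theory Defs
  imports Main
begin

definition simple_graph :: "'a set \<Rightarrow> ('a \<Rightarrow> 'a \<Rightarrow> bool) \<Rightarrow> bool" where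
  "simple_graph V E \<longleftrightarrow> finite V \<and> (\<forall>u\<in>V. \<forall>v\<in>V. E u v \<longleftrightarrow> E v u) \<and> (\<forall>v\<in>V. \<not> E v v)"

definition is_clique :: "'a set \<Rightarrow> ('a \<Rightarrow> 'a \<Rightarrow> bool) \<Rightarrow> 'a set \<Rightarrow> bool" where
  "is_clique V E C \<longleftrightarrow> C \<subseteq> V \<and> (\<forall>u\<in>C. \<forall>v\<in>C. u \<noteq> v \<longrightarrow> E u v)"

definition is_maximal_clique :: "'a set \<Rightarrow> ('a \<Rightarrow> 'a \<Rightarrow> bool) \<Rightarrow> 'a set \<Rightarrow> bool" where
  "is_maximal_clique V E C \<longleftrightarrow> is_clique V E C \<and> (\<forall>D. is_clique V E D \<and> C \<subseteq> D \<longrightarrow> D = C)"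

definition num_maximal_cliques :: "'a set \<Rightarrow> ('a \<Rightarrow> 'a \<Rightarrow> bool) \<Rightarrow> nat" where
  "num_maximal_cliques V E = card {C. is_maximal_clique V E C}"

type_synonym gpoint = "int \<times> int"
type_synonym gedge = "gpoint set"

definition grid_edge :: "gedge \<Rightarrow> bool" where
  "grid_edge e \<longleftrightarrow> (\<exists>p q. e = {p, q} \<and> \<bar>fst p - fst q\<bar> + \<bar>snd p - snd q\<bar> = 1)"

definition horizontal :: "gedge \<Rightarrow> bool" where
  "horizontal e \<longleftrightarrow> (\<exists>p q. e = {p, q} \<and> snd p = snd q \<and> \<bar>fst p - fst q\<bar> = 1)"

definition grid_path :: "gedge list \<Rightarrow> bool" where
  "grid_path P \<longleftrightarrow> P \<noteq> [] \<and> distinct P \<and> (\<forall>e\<in>set P. grid_edge e) \<and>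
     (\<forall>i. Suc i < length P \<longrightarrow> card (P ! i \<inter> P ! Suc i) = 1) \<and>
     (\<forall>i j. i < length P \<and> j < length P \<and> Suc i < j \<longrightarrow> P ! i \<inter> P ! j = {})"

definition bends :: "gedge list \<Rightarrow> nat" where
  "bends P = card {i. Suc i < length P \<and> (horizontal (P ! i) \<noteq> horizontal (P ! Suc i))}"

definition EPG_rep :: "'a set \<Rightarrow> ('a \<Rightarrow> 'a \<Rightarrow> bool) \<Rightarrow> ('a \<Rightarrow> gedge list) \<Rightarrow> bool" where
  "EPG_rep V E P \<longleftrightarrow> (\<forall>v\<in>V. grid_path (P v)) \<and>
     (\<forall>u\<in>V. \<forall>v\<in>V. u \<noteq> v \<longrightarrow> (E u v \<longleftrightarrow> set (P u) \<inter> set (P v) \<noteq> {}))"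

definition Bk_EPG_rep :: "nat \<Rightarrow> 'a set \<Rightarrow> ('a \<Rightarrow> 'a \<Rightarrow> bool) \<Rightarrow> ('a \<Rightarrow> gedge list) \<Rightarrow> bool" where
  "Bk_EPG_rep k V E P \<longleftrightarrow> EPG_rep V E P \<and> (\<forall>v\<in>V. bends (P v) \<le> k)"

definition helly_rep :: "'a set \<Rightarrow> ('a \<Rightarrow> gedge list) \<Rightarrow> bool" where
  "helly_rep V P \<longleftrightarrow> (\<forall>S. S \<subseteq> V \<and> S \<noteq> {} \<and>
       (\<forall>u\<in>S. \<forall>v\<in>S. set (P u) \<inter> set (P v) \<noteq> {}) \<longrightarrow>
       (\<exists>e. \<forall>v\<in>S. e \<in> set (P v)))"

definition helly_bend_number :: "'a set \<Rightarrow> ('a \<Rightarrow> 'a \<Rightarrow> bool) \<Rightarrow> nat" where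
  "helly_bend_number V E = (LEAST k. \<exists>P. Bk_EPG_rep k V E P \<and> helly_rep V P)"

end

(*
  Number the maximal cliques 0, ..., mu - 1 and give clique k the grid edge at the diagonal
  point (k, k) that is horizontal iff k is odd.  A vertex lying in the cliques k_1 < ... < k_r
  is represented by a monotone staircase through (k_1, k_1), ..., (k_r, k_r): from (a, a) it
  first moves in the direction of the edge of clique a up to the row or column of b, and then
  in the other direction up to (b, b).  It therefore contains the edges of all its cliques,
  and each of its horizontal (vertical) edges lies in row (column) k_i for some i; so two
  staircases share an edge iff their vertices share a maximal clique.  This gives an EPG
  representation, and it is Helly because a pairwise intersecting family of paths belongs to
  a clique, and the edge of a maximal clique containing it is common to all of them.  The leg
  from a to b has one bend, plus one at (b, b) only if a and b have equal parity, i.e. only if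
  b - a >= 2; so a staircase has at most k_r - k_1 <= mu - 1 bends.
*)

theory Submission
  imports Defs
begin

lemma maximal_clique_containing:
  assumes "finite V" "is_clique V E D"
  obtains C where "is_maximal_clique V E C" "D \<subseteq> C"
proof -
  let ?A = "{C. is_clique V E C \<and> D \<subseteq> C}"
  have "?A \<subseteq> Pow V"
    by (auto simp: is_clique_def)
  then have "finite ?A"
    using assms(1) by (simp add: finite_subset)
  moreover have "D \<in> ?A"
    using assms(2) by simp
  ultimately obtain C where "C \<in> ?A" "\<forall>C'\<in>?A. C \<subseteq> C' \<longrightarrow> C = C'"
    using finite_has_maximal[of ?A] by blast
  then have "is_maximal_clique V E C" "D \<subseteq> C"
    unfolding is_maximal_clique_def by auto
  then show ?thesis
    by (rule that)
qed

lemma adjacent_iff_in_common_maximal_clique: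
  assumes G: "simple_graph V E" and uv: "u \<in> V" "v \<in> V" "u \<noteq> v"
  shows "E u v \<longleftrightarrow> (\<exists>C. is_maximal_clique V E C \<and> u \<in> C \<and> v \<in> C)"
proof
  assume "E u v"
  have "finite V"
    using G by (simp add: simple_graph_def)
  moreover have "is_clique V E {u, v}"
    using G uv \<open>E u v\<close> unfolding simple_graph_def is_clique_def by auto
  ultimately obtain C where "is_maximal_clique V E C" "{u, v} \<subseteq> C"
    by (rule maximal_clique_containing)
  then show "\<exists>C. is_maximal_clique V E C \<and> u \<in> C \<and> v \<in> C"
    by blast
next
  assume "\<exists>C. is_maximal_clique V E C \<and> u \<in> C \<and> v \<in> C"
  then show "E u v"
    using uv(3) unfolding is_maximal_clique_def is_clique_def by blast
qed

lemma helly_EPG_rep_of_clique_edges: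
  assumes G: "simple_graph V E"
    and paths: "\<And>v. v \<in> V \<Longrightarrow> grid_path (P v)"
    and clique_edge: "\<And>C v. is_maximal_clique V E C \<Longrightarrow> v \<in> C \<Longrightarrow> e C \<in> set (P v)"
    and shared_edge: "\<And>u v. set (P u) \<inter> set (P v) \<noteq> {} \<Longrightarrow>
                         \<exists>C. is_maximal_clique V E C \<and> u \<in> C \<and> v \<in> C"
  shows "EPG_rep V E P" "helly_rep V P"
proof -
  have adj: "E u v \<longleftrightarrow> set (P u) \<inter> set (P v) \<noteq> {}"
    if uv: "u \<in> V" "v \<in> V" "u \<noteq> v" for u v
  proof
    assume "E u v"
    then obtain C where "is_maximal_clique V E C" "u \<in> C" "v \<in> C"
      using adjacent_iff_in_common_maximal_clique[OF G uv] by blast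
    then show "set (P u) \<inter> set (P v) \<noteq> {}"
      using clique_edge by blast
  next
    assume "set (P u) \<inter> set (P v) \<noteq> {}"
    then show "E u v"
      using adjacent_iff_in_common_maximal_clique[OF G uv] shared_edge by blast
  qed
  then show "EPG_rep V E P"
    unfolding EPG_rep_def using paths by blast
  show "helly_rep V P"
    unfolding helly_rep_def
  proof (intro allI impI)
    fix S
    assume S: "S \<subseteq> V \<and> S \<noteq> {} \<and> (\<forall>u\<in>S. \<forall>v\<in>S. set (P u) \<inter> set (P v) \<noteq> {})"
    have "finite V"
      using G by (simp add: simple_graph_def)
    moreover have "is_clique V E S"
      using S adj unfolding is_clique_def by blast
    ultimately obtain C where "is_maximal_clique V E C" "S \<subseteq> C"
      by (rule maximal_clique_containing)
    then show "\<exists>e. \<forall>v\<in>S. e \<in> set (P v)"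
      using clique_edge by blast
  qed
qed

definition grid_step :: "bool \<Rightarrow> gpoint \<Rightarrow> gpoint" where
  "grid_step h p = (if h then (fst p + 1, snd p) else (fst p, snd p + 1))"

definition fixed_coord :: "bool \<Rightarrow> gpoint \<Rightarrow> int" where
  "fixed_coord h p = (if h then snd p else fst p)"

fun walk :: "gpoint \<Rightarrow> bool list \<Rightarrow> gedge list" where
  "walk p [] = []"
| "walk p (h # hs) = {p, grid_step h p} # walk (grid_step h p) hs"

definition walk_point :: "gpoint \<Rightarrow> bool list \<Rightarrow> nat \<Rightarrow> gpoint" where
  "walk_point p hs t = fold grid_step (take t hs) p"

fun direction_changes :: "bool list \<Rightarrow> nat" where
  "direction_changes (x # y # r) = (if x = y then 0 else 1) + direction_changes (y # r)"
| "direction_changes _ = 0"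

lemma grid_edge_step: "grid_edge {p, grid_step h p}"
  unfolding grid_edge_def by (rule exI[of _ p], rule exI[of _ "grid_step h p"]) (simp add: grid_step_def)

lemma horizontal_step_iff: "horizontal {p, grid_step h p} \<longleftrightarrow> h"
proof
  show "h \<Longrightarrow> horizontal {p, grid_step h p}"
    unfolding horizontal_def by (rule exI[of _ p], rule exI[of _ "grid_step h p"]) (simp add: grid_step_def)
qed (auto simp: horizontal_def grid_step_def doubleton_eq_iff split: if_splits)

lemma step_edge_eq_iff: "{p, grid_step h p} = {q, grid_step g q} \<longleftrightarrow> p = q \<and> h = g"
  unfolding grid_step_def by (cases p; cases q) (auto simp: doubleton_eq_iff)

lemma fixed_coord_step: "fixed_coord h (grid_step h p) = fixed_coord h p"
  unfolding fixed_coord_def grid_step_def by simp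

lemma length_walk [simp]: "length (walk p hs) = length hs"
  by (induction hs arbitrary: p) auto

lemma walk_append: "walk p (xs @ ys) = walk p xs @ walk (fold grid_step xs p) ys"
  by (induction xs arbitrary: p) auto

lemma walk_point_Suc:
  "t < length hs \<Longrightarrow> walk_point p hs (Suc t) = grid_step (hs ! t) (walk_point p hs t)"
  unfolding walk_point_def by (simp add: take_Suc_conv_app_nth)

lemma walk_nth: "t < length hs \<Longrightarrow> walk p hs ! t = {walk_point p hs t, walk_point p hs (Suc t)}"
proof (induction hs arbitrary: p t)
  case (Cons h hs)
  then show ?case by (cases t) (auto simp: walk_point_def)
qed simp

lemma coord_sum_fold_grid_step:
  "fst (fold grid_step hs p) + snd (fold grid_step hs p) = fst p + snd p + int (length hs)"
  by (induction hs arbitrary: p) (auto simp: grid_step_def)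

lemma walk_point_eq_iff:
  assumes "i \<le> length hs" "j \<le> length hs"
  shows "walk_point p hs i = walk_point p hs j \<longleftrightarrow> i = j"
  using assms coord_sum_fold_grid_step[of "take i hs" p] coord_sum_fold_grid_step[of "take j hs" p]
  unfolding walk_point_def by (metis add_left_cancel length_take min.absorb2 of_nat_eq_iff)

lemma grid_path_walk:
  assumes "hs \<noteq> []"
  shows "grid_path (walk p hs)"
proof -
  let ?q = "walk_point p hs"
  have eq_iff: "?q i = ?q j \<longleftrightarrow> i = j" if "i \<le> length hs" "j \<le> length hs" for i j
    using walk_point_eq_iff that by blast
  have "distinct (walk p hs)"
  proof (rule distinct_conv_nth[THEN iffD2], intro allI impI)
    fix i j assume "i < length (walk p hs)" "j < length (walk p hs)" "i \<noteq> j"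
    then show "walk p hs ! i \<noteq> walk p hs ! j"
      using eq_iff[of i j] eq_iff[of i "Suc j"] eq_iff[of "Suc i" j]
      by (auto simp: walk_nth doubleton_eq_iff)
  qed
  moreover have "card (walk p hs ! i \<inter> walk p hs ! Suc i) = 1" if "Suc i < length hs" for i
  proof -
    have "walk p hs ! i \<inter> walk p hs ! Suc i = {?q (Suc i)}"
      using that eq_iff[of i "Suc i"] eq_iff[of i "Suc (Suc i)"] eq_iff[of "Suc i" "Suc (Suc i)"]
      by (auto simp: walk_nth)
    then show ?thesis by simp
  qed
  moreover have "walk p hs ! i \<inter> walk p hs ! j = {}"
    if "i < length hs" "j < length hs" "Suc i < j" for i j
    using that eq_iff[of i j] eq_iff[of i "Suc j"] eq_iff[of "Suc i" j] eq_iff[of "Suc i" "Suc j"]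
    by (auto simp: walk_nth)
  moreover have "grid_edge e" if "e \<in> set (walk p hs)" for e
    using that by (auto simp: in_set_conv_nth walk_nth walk_point_Suc grid_edge_step)
  moreover have "walk p hs \<noteq> []"
    using assms by (metis length_0_conv length_walk)
  ultimately show ?thesis
    unfolding grid_path_def by auto
qed

lemma direction_changes_Cons:
  "direction_changes (x # ys) = (if ys \<noteq> [] \<and> x \<noteq> hd ys then 1 else 0) + direction_changes ys"
  by (cases ys) auto

lemma direction_changes_append:
  "direction_changes (xs @ ys) = direction_changes xs + direction_changes ys
     + (if xs \<noteq> [] \<and> ys \<noteq> [] \<and> last xs \<noteq> hd ys then 1 else 0)"
  by (induction xs) (auto simp: direction_changes_Cons)

lemma direction_changes_replicate [simp]: "direction_changes (replicate n x) = 0"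
  by (induction n) (auto simp: direction_changes_Cons)

lemma card_direction_changes:
  "card {i. Suc i < length xs \<and> xs ! i \<noteq> xs ! Suc i} = direction_changes xs"
proof (induction xs rule: direction_changes.induct)
  case (1 x y r)
  have "{i. Suc i < length (x # y # r) \<and> (x # y # r) ! i \<noteq> (x # y # r) ! Suc i}
     = (if x = y then {} else {0}) \<union>
       Suc ` {i. Suc i < length (y # r) \<and> (y # r) ! i \<noteq> (y # r) ! Suc i}"
    (is "?A = ?B")
  proof (rule set_eqI)
    show "i \<in> ?A \<longleftrightarrow> i \<in> ?B" for i
      by (cases i) (auto simp: image_iff)
  qed
  then show ?case using 1 by (simp add: card_image)
qed auto

lemma bends_walk: "bends (walk p hs) = direction_changes hs"
proof -
  have "horizontal (walk p hs ! i) \<longleftrightarrow> hs ! i" if "i < length hs" for i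
    using that by (simp add: walk_nth walk_point_Suc horizontal_step_iff)
  then have "{i. Suc i < length (walk p hs) \<and> horizontal (walk p hs ! i) \<noteq> horizontal (walk p hs ! Suc i)}
      = {i. Suc i < length hs \<and> hs ! i \<noteq> hs ! Suc i}"
    by auto
  then show ?thesis
    unfolding bends_def by (metis card_direction_changes)
qed

definition diagonal_point :: "nat \<Rightarrow> gpoint" where
  "diagonal_point k = (int k, int k)"

definition diagonal_edge :: "nat \<Rightarrow> gedge" where
  "diagonal_edge k = {diagonal_point k, grid_step (odd k) (diagonal_point k)}"

fun stair_moves :: "nat list \<Rightarrow> bool list" where
  "stair_moves [] = []"
| "stair_moves [a] = [odd a]"
| "stair_moves (a # b # r) =
     replicate (b - a) (odd a) @ replicate (b - a) (\<not> odd a) @ stair_moves (b # r)"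

definition stair_path :: "nat list \<Rightarrow> gedge list" where
  "stair_path L = walk (diagonal_point (hd L)) (stair_moves L)"

lemma fold_grid_step_replicate:
  "fold grid_step (replicate n h) p =
     (if h then (fst p + int n, snd p) else (fst p, snd p + int n))"
  by (induction n arbitrary: p) (auto simp: grid_step_def)

lemma walk_replicate_on_line:
  "e \<in> set (walk p (replicate n h)) \<Longrightarrow>
    \<exists>q. e = {q, grid_step h q} \<and> fixed_coord h q = fixed_coord h p"
proof (induction n arbitrary: p)
  case (Suc n)
  show ?case
  proof (cases "e = {p, grid_step h p}")
    case False
    then have "e \<in> set (walk (grid_step h p) (replicate n h))"
      using Suc.prems by simp
    then show ?thesis
      using Suc.IH fixed_coord_step by metis
  qed blast
qed simp

lemma stair_path_Cons_Cons:
  assumes "a < b"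
  shows "stair_path (a # b # r) =
    walk (diagonal_point a) (replicate (b - a) (odd a)) @
    walk (fold grid_step (replicate (b - a) (odd a)) (diagonal_point a)) (replicate (b - a) (\<not> odd a)) @
    stair_path (b # r)"
  using assms by (simp add: stair_path_def walk_append fold_grid_step_replicate diagonal_point_def
      del: fold_replicate)

lemma stair_moves_starts_with_odd:
  assumes "sorted_wrt (<) (a # r)"
  shows "\<exists>hs. stair_moves (a # r) = odd a # hs"
  using assms by (cases r) (auto dest!: less_imp_Suc_add)

lemma grid_path_stair_path:
  assumes "sorted_wrt (<) L" "L \<noteq> []"
  shows "grid_path (stair_path L)"
  using assms stair_moves_starts_with_odd[of "hd L" "tl L"]
  unfolding stair_path_def by (auto intro!: grid_path_walk)

lemma diagonal_edge_in_stair_path: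
  "sorted_wrt (<) L \<Longrightarrow> k \<in> set L \<Longrightarrow> diagonal_edge k \<in> set (stair_path L)"
proof (induction L rule: stair_moves.induct)
  case (2 a)
  then show ?case by (simp add: stair_path_def diagonal_edge_def)
next
  case (3 a b r)
  show ?case
  proof (cases "k = a")
    case True
    obtain hs where "stair_moves (a # b # r) = odd a # hs"
      using stair_moves_starts_with_odd[OF "3.prems"(1)] by blast
    then show ?thesis
      unfolding stair_path_def True diagonal_edge_def by simp
  next
    case False
    then have "diagonal_edge k \<in> set (stair_path (b # r))"
      using 3 by simp
    then show ?thesis
      using "3.prems"(1) by (simp add: stair_path_Cons_Cons)
  qed
qed simp

lemma stair_path_edge_on_index_line:
  "sorted_wrt (<) L \<Longrightarrow> e \<in> set (stair_path L) \<Longrightarrow>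
    \<exists>q h k. k \<in> set L \<and> e = {q, grid_step h q} \<and> fixed_coord h q = int k"
proof (induction L rule: stair_moves.induct)
  case (2 a)
  then have "e = {diagonal_point a, grid_step (odd a) (diagonal_point a)}"
    by (simp add: stair_path_def)
  moreover have "fixed_coord (odd a) (diagonal_point a) = int a"
    by (simp add: fixed_coord_def diagonal_point_def)
  ultimately show ?case
    by (intro exI[of _ "diagonal_point a"] exI[of _ "odd a"] exI[of _ a]) simp
next
  case (3 a b r)
  let ?d = "b - a"
  let ?p = "fold grid_step (replicate ?d (odd a)) (diagonal_point a)"
  have ab: "a < b" using "3.prems"(1) by simp
  have coord_a: "fixed_coord (odd a) (diagonal_point a) = int a"
    by (simp add: fixed_coord_def diagonal_point_def)
  have coord_b: "fixed_coord (\<not> odd a) ?p = int b"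
    using ab by (simp add: fold_grid_step_replicate fixed_coord_def diagonal_point_def del: fold_replicate)
  consider
      "e \<in> set (walk (diagonal_point a) (replicate ?d (odd a)))"
    | "e \<in> set (walk ?p (replicate ?d (\<not> odd a)))"
    | "e \<in> set (stair_path (b # r))"
    using "3.prems"(2) ab by (auto simp: stair_path_Cons_Cons simp del: fold_replicate)
  then show ?case
  proof cases
    case 1
    then obtain q where "e = {q, grid_step (odd a) q}" "fixed_coord (odd a) q = int a"
      using walk_replicate_on_line coord_a by metis
    then show ?thesis by (intro exI[of _ q] exI[of _ "odd a"] exI[of _ a]) simp
  next
    case 2
    then obtain q where "e = {q, grid_step (\<not> odd a) q}" "fixed_coord (\<not> odd a) q = int b"
      using walk_replicate_on_line coord_b by metis
    then show ?thesis by (intro exI[of _ q] exI[of _ "\<not> odd a"] exI[of _ b]) simp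
  next
    case 3
    then obtain q h k where "k \<in> set (b # r)" "e = {q, grid_step h q}" "fixed_coord h q = int k"
      using "3.IH" "3.prems"(1) by auto
    then show ?thesis by (intro exI[of _ q] exI[of _ h] exI[of _ k]) simp
  qed
qed (simp add: stair_path_def)

lemma stair_paths_common_index:
  assumes "sorted_wrt (<) L" "sorted_wrt (<) L'"
    and "e \<in> set (stair_path L)" "e \<in> set (stair_path L')"
  shows "\<exists>k. k \<in> set L \<and> k \<in> set L'"
  using stair_path_edge_on_index_line[OF assms(1,3)] stair_path_edge_on_index_line[OF assms(2,4)]
  by (auto simp: step_edge_eq_iff)

lemma direction_changes_stair_moves:
  "sorted_wrt (<) L \<Longrightarrow> direction_changes (stair_moves L) \<le> last L - hd L"
proof (induction L rule: stair_moves.induct)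
  case (3 a b r)
  let ?d = "b - a"
  have ab: "a < b" and last_ge: "b \<le> last (b # r)"
    using "3.prems" by (auto simp: last_in_set less_imp_le)
  obtain hs where hs: "stair_moves (b # r) = odd b # hs"
    using stair_moves_starts_with_odd[of b r] "3.prems" by auto
  have "direction_changes (stair_moves (a # b # r))
      = 1 + (if odd a = odd b then 1 else 0) + direction_changes (stair_moves (b # r))"
    using ab hs by (auto simp: direction_changes_append)
  also have "\<dots> \<le> ?d + (last (b # r) - b)"
  proof -
    have "odd a = odd b \<Longrightarrow> a + 2 \<le> b"
      using ab by presburger
    then show ?thesis
      using ab "3.IH" "3.prems" by auto
  qed
  finally show ?case
    using ab last_ge by simp
qed auto

lemma bends_stair_path_le:
  assumes "sorted_wrt (<) L" "set L \<subseteq> {..<m}"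
  shows "bends (stair_path L) \<le> m - 1"
proof (cases "L = []")
  case False
  then have "last L < m"
    using assms(2) last_in_set by blast
  then show ?thesis
    using direction_changes_stair_moves[OF assms(1)]
    unfolding stair_path_def bends_walk by linarith
qed (simp add: stair_path_def bends_def)

definition clique_indices ::
    "('a set \<Rightarrow> nat) \<Rightarrow> 'a set \<Rightarrow> ('a \<Rightarrow> 'a \<Rightarrow> bool) \<Rightarrow> 'a \<Rightarrow> nat list" where
  "clique_indices h V E v = sorted_list_of_set (h ` {C. is_maximal_clique V E C \<and> v \<in> C})"

lemma finite_maximal_cliques: "finite V \<Longrightarrow> finite {C. is_maximal_clique V E C}"
  by (rule finite_subset[of _ "Pow V"]) (auto simp: is_maximal_clique_def is_clique_def)

lemma sorted_clique_indices: "sorted_wrt (<) (clique_indices h V E v)"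
  by (simp add: clique_indices_def)

lemma set_clique_indices:
  "finite V \<Longrightarrow> set (clique_indices h V E v) = h ` {C. is_maximal_clique V E C \<and> v \<in> C}"
  using finite_maximal_cliques[of V E] by (simp add: clique_indices_def)

lemma clique_indices_ne:
  assumes "finite V" "v \<in> V"
  shows "clique_indices h V E v \<noteq> []"
proof -
  have "is_clique V E {v}"
    using assms(2) by (simp add: is_clique_def)
  with assms(1) obtain C where "is_maximal_clique V E C" "{v} \<subseteq> C"
    by (rule maximal_clique_containing)
  then show ?thesis
    using set_clique_indices[OF assms(1), of h E v] by auto
qed

lemma helly_EPG_rep_clique_stair_paths:
  assumes G: "simple_graph V E" and h: "inj_on h {C. is_maximal_clique V E C}"
  defines "P \<equiv> \<lambda>v. stair_path (clique_indices h V E v)"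
  shows "EPG_rep V E P" "helly_rep V P"
proof -
  have "finite V"
    using G by (simp add: simple_graph_def)
  note set_L = set_clique_indices[OF \<open>finite V\<close>, of h E]
  have paths: "grid_path (P v)" if "v \<in> V" for v
    unfolding P_def using sorted_clique_indices clique_indices_ne[OF \<open>finite V\<close> that]
    by (rule grid_path_stair_path)
  have clique_edge: "diagonal_edge (h C) \<in> set (P v)" if "is_maximal_clique V E C" "v \<in> C" for C v
    unfolding P_def using sorted_clique_indices by (rule diagonal_edge_in_stair_path) (use that set_L in auto)
  have shared_edge: "\<exists>C. is_maximal_clique V E C \<and> u \<in> C \<and> v \<in> C"
    if common: "set (P u) \<inter> set (P v) \<noteq> {}" for u v
  proof -
    obtain e where "e \<in> set (P u)" "e \<in> set (P v)"
      using common by blast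
    then obtain k where "k \<in> set (clique_indices h V E u)" "k \<in> set (clique_indices h V E v)"
      unfolding P_def by (metis stair_paths_common_index sorted_clique_indices)
    then obtain C C' where "is_maximal_clique V E C" "u \<in> C" "is_maximal_clique V E C'" "v \<in> C'"
        "h C = h C'"
      unfolding set_L by auto
    with h show ?thesis
      unfolding inj_on_def by blast
  qed
  show "EPG_rep V E P" "helly_rep V P"
    using helly_EPG_rep_of_clique_edges[of V E P "\<lambda>C. diagonal_edge (h C)",
        OF G paths clique_edge shared_edge] by blast+
qed

theorem corollary2p1:
  fixes V :: "'a set" and E :: "'a \<Rightarrow> 'a \<Rightarrow> bool"
  assumes "simple_graph V E"
  shows "helly_bend_number V E \<le> num_maximal_cliques V E - 1"
proof -
  let ?M = "{C. is_maximal_clique V E C}"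
  have "finite V"
    using assms by (simp add: simple_graph_def)
  then obtain h where h: "bij_betw h ?M {0..<card ?M}"
    using finite_maximal_cliques ex_bij_betw_finite_nat by blast
  define P where "P v = stair_path (clique_indices h V E v)" for v
  have "EPG_rep V E P" "helly_rep V P"
    using helly_EPG_rep_clique_stair_paths[OF assms bij_betw_imp_inj_on[OF h]]
    unfolding P_def by blast+
  moreover have "bends (P v) \<le> card ?M - 1" for v
    unfolding P_def using sorted_clique_indices
  proof (rule bends_stair_path_le)
    show "set (clique_indices h V E v) \<subseteq> {..<card ?M}"
      using h by (auto simp: set_clique_indices[OF \<open>finite V\<close>] bij_betw_def)
  qed
  ultimately have "Bk_EPG_rep (card ?M - 1) V E P \<and> helly_rep V P"
    unfolding Bk_EPG_rep_def by blast
  then show ?thesis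
    unfolding helly_bend_number_def num_maximal_cliques_def by (blast intro: Least_le)
qed

end
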